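(* The connected subgraph arrangements of the following two graphs are not factored: (1) the almost path graph $A_{3,2}$ (the star with central vertex $2$ and leaves $1,3,4$); (2) the cycle graph $C_4$.
   Context: For a finite simple graph $G=(N,E)$ with $N=\{1,\dots,n\}$ and $I\subseteq N$, $G[I]$ denotes the induced subgraph on $I$, and $H_I=\ker\big(\sum_{i\in I}x_i\big)$, where $x_1,\dots,x_n$ are the coordinate functions. The connected subgraph arrangement of $G$ is $\mathcal{A}_G=\{H_I:\emptyset\neq I\subseteq N,\ G[I]\text{ connected}\}$ over $\mathbb{Q}$. $A_{3,2}$ has vertices $1,2,3,4$ and edges $\{1,2\},\{2,3\},\{2,4\}$; $C_4$ has vertices $1,2,3,4$ and edges $\{1,2\},\{2,3\},\{3,4\},\{1,4\}$. A partition $\pi=(\pi_1,\dots,\pi_s)$ of an arrangement $\mathcal{A}$ is nice if (i) for every choice $H_i\in\pi_i$ the $s$ defining forms are linearly independent, and (ii) for every $X\in L(\mathcal{A})\setminus\{V\}$ the induced partition of $\mathcal{A}_X=\{H\in\mathcal{A}:X\subseteq H\}$ into the nonempty sets $\pi_i\cap\mathcal{A}_X$ has a singleton block. $\mathcal{A}$ is factored if it admits a nice partition. *)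

theory Defs
  imports Complex_Main
begin

text \<open>Ambient space Q^n: vectors are functions nat => rat supported on {1..n}.\<close>
definition ambient :: "nat \<Rightarrow> (nat \<Rightarrow> rat) set" where
  "ambient n = {x. \<forall>i. i \<notin> {1..n} \<longrightarrow> x i = 0}"

definition hyp :: "nat \<Rightarrow> nat set \<Rightarrow> (nat \<Rightarrow> rat) set" where
  "hyp n I = {x \<in> ambient n. (\<Sum>i\<in>I. x i) = 0}"

definition form_ker :: "nat \<Rightarrow> (nat \<Rightarrow> rat) \<Rightarrow> (nat \<Rightarrow> rat) set" where
  "form_ker n a = {x \<in> ambient n. (\<Sum>i\<in>{1..n}. a i * x i) = 0}"

definition defining_form :: "nat \<Rightarrow> (nat \<Rightarrow> rat) \<Rightarrow> (nat \<Rightarrow> rat) set \<Rightarrow> bool" where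
  "defining_form n a H \<longleftrightarrow> a \<in> ambient n \<and> a \<noteq> (\<lambda>_. 0) \<and> H = form_ker n a"

definition lin_indep_family :: "'b set \<Rightarrow> ('b \<Rightarrow> nat \<Rightarrow> rat) \<Rightarrow> bool" where
  "lin_indep_family P a \<longleftrightarrow>
     (\<forall>c. (\<lambda>i. \<Sum>B\<in>P. c B * a B i) = (\<lambda>_. 0) \<longrightarrow> (\<forall>B\<in>P. c B = 0))"

text \<open>Graph on vertex set {1..n} with edge set E (2-element sets);
  induced subgraph G[I] connected.\<close>
definition induced_connected :: "nat set set \<Rightarrow> nat set \<Rightarrow> bool" where
  "induced_connected E I \<longleftrightarrow> I \<noteq> {} \<and>
     (\<forall>u\<in>I. \<forall>v\<in>I. (u, v) \<in> ({(x, y). x \<in> I \<and> y \<in> I \<and> {x, y} \<in> E})\<^sup>*)"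

definition csa :: "nat \<Rightarrow> nat set set \<Rightarrow> (nat \<Rightarrow> rat) set set" where
  "csa n E = {hyp n I | I. I \<subseteq> {1..n} \<and> induced_connected E I}"

text \<open>Intersection lattice L(A): intersections of subsets of A (V is the empty intersection).\<close>
definition lattice_L :: "nat \<Rightarrow> (nat \<Rightarrow> rat) set set \<Rightarrow> (nat \<Rightarrow> rat) set set" where
  "lattice_L n A = {ambient n \<inter> \<Inter>S | S. S \<subseteq> A}"

definition localization :: "(nat \<Rightarrow> rat) set set \<Rightarrow> (nat \<Rightarrow> rat) set \<Rightarrow> (nat \<Rightarrow> rat) set set" where
  "localization A X = {H \<in> A. X \<subseteq> H}"

definition is_partition :: "'a set set \<Rightarrow> 'a set \<Rightarrow> bool" where
  "is_partition P A \<longleftrightarrow> (\<forall>B\<in>P. B \<noteq> {}) \<and> \<Union>P = A \<and>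
     (\<forall>B\<in>P. \<forall>C\<in>P. B \<noteq> C \<longrightarrow> B \<inter> C = {})"

definition nice_partition :: "nat \<Rightarrow> (nat \<Rightarrow> rat) set set \<Rightarrow> (nat \<Rightarrow> rat) set set set \<Rightarrow> bool" where
  "nice_partition n A P \<longleftrightarrow> is_partition P A \<and>
     (\<forall>h a. (\<forall>B\<in>P. h B \<in> B \<and> defining_form n (a B) (h B)) \<longrightarrow> lin_indep_family P a) \<and>
     (\<forall>X \<in> lattice_L n A - {ambient n}.
        \<exists>B\<in>P. card (B \<inter> localization A X) = 1)"

definition factored :: "nat \<Rightarrow> (nat \<Rightarrow> rat) set set \<Rightarrow> bool" where
  "factored n A \<longleftrightarrow> (\<exists>P. nice_partition n A P)"

definition A32_edges :: "nat set set" where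
  "A32_edges = {{1,2},{2,3},{2,4}}"

definition C4_edges :: "nat set set" where
  "C4_edges = {{1,2},{2,3},{3,4},{1,4}}"

end

theory Submission
  imports Defs
begin

text \<open>Two kinds of constraint on a nice partition suffice. If the flat \<open>H \<inter> K\<close> of
  two hyperplanes lies on no third hyperplane of the arrangement, condition (ii) at that
  flat forbids \<open>H\<close> and \<open>K\<close> to share a block. If \<open>I\<close> and \<open>J\<close> are disjoint, the forms
  of \<open>H\<^sub>I\<close>, \<open>H\<^sub>J\<close> and \<open>H\<^bsub>I \<union> J\<^esub>\<close> are linearly dependent, so by condition (i)
  these three cannot lie in three different blocks. For both graphs, explicit points of
  \<open>\<rat>\<^sup>4\<close> certify enough pairs of the first kind, and together with the triples of
  the second kind the constraints admit no assignment of hyperplanes to blocks.\<close>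

definition hyp_form :: "nat set \<Rightarrow> nat \<Rightarrow> rat" where
  "hyp_form I i = of_bool (i \<in> I)"

lemma defining_form_hyp:
  assumes "I \<subseteq> {1..n}" "I \<noteq> {}"
  shows "defining_form n (hyp_form I) (hyp n I)"
proof -
  have "(\<Sum>i\<in>{1..n}. hyp_form I i * x i) = (\<Sum>i\<in>I. x i)" for x
  proof -
    have "(\<Sum>i\<in>{1..n}. hyp_form I i * x i) = (\<Sum>i\<in>{1..n} \<inter> I. x i)"
      unfolding hyp_form_def by (simp add: sum.inter_restrict)
    then show ?thesis
      using assms(1) by (simp add: Int_absorb1)
  qed
  moreover have "hyp_form I \<noteq> (\<lambda>_. 0)"
    using assms(2) by (auto simp: fun_eq_iff hyp_form_def)
  ultimately show ?thesis
    using assms(1) unfolding defining_form_def form_ker_def hyp_def ambient_def hyp_form_def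
    by auto
qed

lemma hyp_separating_point:
  assumes "I \<subseteq> {1..n}" "J \<subseteq> {1..n}" "j \<in> J" "i \<in> I" "i \<notin> J"
  shows "\<exists>x\<in>hyp n I. x \<notin> hyp n J"
proof -
  have fin: "finite I" "finite J"
    using assms(1,2) finite_subset by blast+
  define e :: "nat \<Rightarrow> nat \<Rightarrow> rat" where "e k = (\<lambda>l. of_bool (l = k))" for k
  have sum_e: "finite K \<Longrightarrow> (\<Sum>l\<in>K. e k l) = of_bool (k \<in> K)" for K k
    unfolding e_def by (simp add: sum.delta)
  show ?thesis
  proof (cases "j \<in> I")
    case True
    have "(\<lambda>l. e i l - e j l) \<in> ambient n"
      using assms unfolding ambient_def e_def by auto
    then have "(\<lambda>l. e i l - e j l) \<in> hyp n I - hyp n J"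
      using assms True fin unfolding hyp_def by (auto simp: sum_subtractf sum_e)
    then show ?thesis by blast
  next
    case False
    have "e j \<in> ambient n"
      using assms unfolding ambient_def e_def by auto
    then have "e j \<in> hyp n I - hyp n J"
      using assms False fin unfolding hyp_def by (auto simp: sum_e)
    then show ?thesis by blast
  qed
qed

lemma hyp_inject:
  assumes "I \<subseteq> {1..n}" "J \<subseteq> {1..n}" "I \<noteq> {}" "J \<noteq> {}" "hyp n I = hyp n J"
  shows "I = J"
proof (rule ccontr)
  assume "I \<noteq> J"
  then obtain i where "i \<in> I \<and> i \<notin> J \<or> i \<in> J \<and> i \<notin> I"
    by blast
  then show False
    using hyp_separating_point[OF assms(1,2)] hyp_separating_point[OF assms(2,1)] assms(3-5)
    by blast
qed

lemma is_partition_block_subset: "is_partition P A \<Longrightarrow> B \<in> P \<Longrightarrow> B \<subseteq> A"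
  unfolding is_partition_def by (metis Union_upper)

lemma is_partition_block_nonempty: "is_partition P A \<Longrightarrow> B \<in> P \<Longrightarrow> B \<noteq> {}"
  unfolding is_partition_def by simp

lemma is_partition_disjoint:
  "is_partition P A \<Longrightarrow> B \<in> P \<Longrightarrow> C \<in> P \<Longrightarrow> B \<noteq> C \<Longrightarrow> B \<inter> C = {}"
  unfolding is_partition_def by simp

lemma is_partition_cover: "is_partition P A \<Longrightarrow> H \<in> A \<Longrightarrow> \<exists>B\<in>P. H \<in> B"
  unfolding is_partition_def by (metis UnionE)

lemma is_partition_finite: "is_partition P A \<Longrightarrow> finite A \<Longrightarrow> finite P"
  by (metis is_partition_block_subset PowI finite_Pow_iff rev_finite_subset subsetI)

lemma lin_indep_family_subset:
  assumes indep: "lin_indep_family P a" and "finite P" "Q \<subseteq> P"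
  shows "lin_indep_family Q a"
  unfolding lin_indep_family_def
proof (intro allI impI)
  fix c assume zero: "(\<lambda>i. \<Sum>B\<in>Q. c B * a B i) = (\<lambda>_. 0)"
  define c' where "c' B = (if B \<in> Q then c B else 0)" for B
  have "(\<Sum>B\<in>P. c' B * a B i) = (\<Sum>B\<in>P \<inter> Q. c B * a B i)" for i
    unfolding c'_def sum.inter_restrict[OF \<open>finite P\<close>] by (rule sum.cong) auto
  then have "(\<lambda>i. \<Sum>B\<in>P. c' B * a B i) = (\<lambda>_. 0)"
    using zero \<open>Q \<subseteq> P\<close> by (simp add: Int_absorb1 fun_eq_iff)
  then have "\<forall>B\<in>P. c' B = 0"
    using indep unfolding lin_indep_family_def by blast
  then show "\<forall>B\<in>Q. c B = 0"
    using \<open>Q \<subseteq> P\<close> unfolding c'_def by (metis subsetD)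
qed

lemma nice_partition_is_partition: "nice_partition n A P \<Longrightarrow> is_partition P A"
  unfolding nice_partition_def by (elim conjE)

lemma nice_partition_lin_indep:
  assumes "nice_partition n A P" "\<forall>B\<in>P. h B \<in> B \<and> defining_form n (a B) (h B)"
  shows "lin_indep_family P a"
  using assms unfolding nice_partition_def by blast

lemma nice_partition_representatives_lin_indep:
  assumes nice: "nice_partition n A P" and "finite A"
    and forms: "\<forall>H\<in>A. \<exists>a. defining_form n a H"
    and "Q \<subseteq> P" and reps: "\<forall>B\<in>Q. h B \<in> B \<and> defining_form n (a B) (h B)"
  shows "lin_indep_family Q a"
proof -
  have part: "is_partition P A"
    using nice by (rule nice_partition_is_partition)
  have "\<forall>B\<in>P. \<exists>H. H \<in> B"
    using is_partition_block_nonempty[OF part] by blast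
  then obtain g where g: "\<forall>B\<in>P. g B \<in> B"
    by (metis bchoice)
  have "\<forall>B\<in>P. \<exists>a. defining_form n a (g B)"
    using is_partition_block_subset[OF part] g forms by blast
  then obtain f where "\<forall>B\<in>P. defining_form n (f B) (g B)"
    by (metis bchoice)
  with g have gf: "\<forall>B\<in>P. g B \<in> B \<and> defining_form n (f B) (g B)"
    by blast
  define a' where "a' B = (if B \<in> Q then a B else f B)" for B
  have "lin_indep_family P a'"
    using reps gf unfolding a'_def
    by (intro nice_partition_lin_indep[OF nice, where h = "\<lambda>B. if B \<in> Q then h B else g B"])
      auto
  moreover have "finite P"
    using part \<open>finite A\<close> by (rule is_partition_finite)
  ultimately have "lin_indep_family Q a'"
    using lin_indep_family_subset \<open>Q \<subseteq> P\<close> by blast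
  then show ?thesis
    unfolding lin_indep_family_def a'_def by simp
qed

lemma nice_partition_separates_pair:
  assumes nice: "nice_partition n A P"
    and "H \<in> A" "K \<in> A" "H \<noteq> K" "H \<subseteq> ambient n" "K \<subseteq> ambient n"
    and loc: "localization A (H \<inter> K) = {H, K}"
    and "B \<in> P" "H \<in> B"
  shows "K \<notin> B"
proof
  assume "K \<in> B"
  have part: "is_partition P A"
    using nice by (rule nice_partition_is_partition)
  have "H \<inter> K = ambient n \<inter> \<Inter>{H, K}"
    using assms(5,6) by auto
  then have "H \<inter> K \<in> lattice_L n A"
    using assms(2,3) unfolding lattice_L_def by blast
  moreover have "H \<inter> K \<noteq> ambient n"
    using assms(4-6) by blast
  ultimately obtain B' where "B' \<in> P" "card (B' \<inter> localization A (H \<inter> K)) = 1"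
    using nice unfolding nice_partition_def by blast
  then have B': "B' \<in> P" and card_one: "card (B' \<inter> {H, K}) = 1"
    unfolding loc by simp_all
  have "B' \<inter> {H, K} = {H, K} \<or> B' \<inter> {H, K} = {}"
  proof (cases "B' = B")
    case False
    then have "B' \<inter> B = {}"
      using is_partition_disjoint[OF part B' \<open>B \<in> P\<close>] by blast
    then show ?thesis
      using \<open>H \<in> B\<close> \<open>K \<in> B\<close> by blast
  qed (use \<open>H \<in> B\<close> \<open>K \<in> B\<close> in blast)
  then have "card (B' \<inter> {H, K}) \<in> {card {H, K}, 0}"
    by auto
  then show False
    using card_one \<open>H \<noteq> K\<close> by simp
qed

lemma induced_connected_star:
  assumes "\<exists>c\<in>I. \<forall>u\<in>I. u \<noteq> c \<longrightarrow> {u, c} \<in> E"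
  shows "induced_connected E I"
  unfolding induced_connected_def
proof (intro conjI ballI)
  obtain c where c: "c \<in> I" "\<forall>u\<in>I. u \<noteq> c \<longrightarrow> {u, c} \<in> E"
    using assms by blast
  then show "I \<noteq> {}"
    by blast
  let ?R = "{(x, y). x \<in> I \<and> y \<in> I \<and> {x, y} \<in> E}"
  have "(u, c) \<in> ?R" "(c, u) \<in> ?R" if "u \<in> I" "u \<noteq> c" for u
  proof -
    have "{u, c} \<in> E"
      using c that by blast
    then show "(u, c) \<in> ?R" "(c, u) \<in> ?R"
      using c(1) that(1) by (simp_all add: insert_commute)
  qed
  then have to_c: "(u, c) \<in> ?R\<^sup>*" and from_c: "(c, u) \<in> ?R\<^sup>*" if "u \<in> I" for u
    using that by (cases "u = c"; blast)+
  fix u v assume "u \<in> I" "v \<in> I"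
  then show "(u, v) \<in> ?R\<^sup>*"
    using to_c from_c by (meson rtrancl_trans)
qed

lemma induced_connected_insert:
  assumes conn: "induced_connected E I" and "\<exists>u\<in>I. {v, u} \<in> E"
  shows "induced_connected E (insert v I)"
  unfolding induced_connected_def
proof (intro conjI ballI)
  show "insert v I \<noteq> {}"
    by blast
  let ?R = "{(x, y). x \<in> insert v I \<and> y \<in> insert v I \<and> {x, y} \<in> E}"
  have in_I: "(x, y) \<in> ?R\<^sup>*" if "x \<in> I" "y \<in> I" for x y
  proof -
    have "(x, y) \<in> {(x, y). x \<in> I \<and> y \<in> I \<and> {x, y} \<in> E}\<^sup>*"
      using conn that unfolding induced_connected_def by blast
    also have "\<dots> \<subseteq> ?R\<^sup>*"
      by (rule rtrancl_mono) blast
    finally show ?thesis .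
  qed
  obtain u where u: "u \<in> I" "{v, u} \<in> E"
    using assms(2) by blast
  then have "(v, u) \<in> ?R" "(u, v) \<in> ?R"
    by (simp_all add: insert_commute)
  then have to_u: "(x, u) \<in> ?R\<^sup>*" and from_u: "(u, x) \<in> ?R\<^sup>*" if "x \<in> insert v I" for x
    using that in_I u(1) by blast+
  fix x y assume "x \<in> insert v I" "y \<in> insert v I"
  then show "(x, y) \<in> ?R\<^sup>*"
    using to_u from_u by (meson rtrancl_trans)
qed

lemma induced_connected_has_neighbour:
  assumes "induced_connected E I" "u \<in> I" "v \<in> I" "u \<noteq> v"
  shows "\<exists>w\<in>I. {u, w} \<in> E"
proof -
  let ?R = "{(x, y). x \<in> I \<and> y \<in> I \<and> {x, y} \<in> E}"
  have "(u, v) \<in> ?R\<^sup>*"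
    using assms unfolding induced_connected_def by blast
  then show ?thesis
    using assms(4) by (cases rule: converse_rtranclE) auto
qed

definition connected_sets :: "nat \<Rightarrow> nat set set \<Rightarrow> nat set set" where
  "connected_sets n E = {I. I \<subseteq> {1..n} \<and> induced_connected E I}"

lemma csa_eq_image_connected_sets: "csa n E = hyp n ` connected_sets n E"
  unfolding csa_def connected_sets_def by blast

lemma connected_sets_subset: "I \<in> connected_sets n E \<Longrightarrow> I \<subseteq> {1..n}"
  and connected_sets_nonempty: "I \<in> connected_sets n E \<Longrightarrow> I \<noteq> {}"
  unfolding connected_sets_def induced_connected_def by simp_all

lemma finite_connected_sets: "finite (connected_sets n E)"
  by (rule finite_subset[of _ "Pow {1..n}"]) (use connected_sets_subset in blast)+

lemma finite_csa: "finite (csa n E)"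
  by (simp add: csa_eq_image_connected_sets finite_connected_sets)

lemma defining_form_hyp_connected:
  "I \<in> connected_sets n E \<Longrightarrow> defining_form n (hyp_form I) (hyp n I)"
  by (rule defining_form_hyp[OF connected_sets_subset connected_sets_nonempty])

locale csa_nice_partition =
  fixes n :: nat and E :: "nat set set" and P :: "(nat \<Rightarrow> rat) set set set"
  assumes nice: "nice_partition n (csa n E) P"
begin

lemma partition: "is_partition P (csa n E)"
  using nice by (rule nice_partition_is_partition)

definition block :: "nat set \<Rightarrow> (nat \<Rightarrow> rat) set set" where
  "block I = (THE B. B \<in> P \<and> hyp n I \<in> B)"

lemma block_eqI:
  assumes "B \<in> P" "hyp n I \<in> B"
  shows "block I = B"
  unfolding block_def
proof (rule the_equality)
  show "\<And>C. C \<in> P \<and> hyp n I \<in> C \<Longrightarrow> C = B"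
    using is_partition_disjoint[OF partition _ assms(1)] assms(2) by blast
qed (use assms in blast)

lemma block_mem:
  assumes "I \<in> connected_sets n E"
  shows "block I \<in> P" "hyp n I \<in> block I"
proof -
  obtain B where "B \<in> P" "hyp n I \<in> B"
    using is_partition_cover[OF partition] assms csa_eq_image_connected_sets by blast
  then show "block I \<in> P" "hyp n I \<in> block I"
    using block_eqI by simp_all
qed

lemma block_neq_of_witness:
  assumes I: "I \<in> connected_sets n E" and J: "J \<in> connected_sets n E" and "I \<noteq> J"
    and "w \<in> ambient n" "sum w I = 0" "sum w J = 0"
    and only: "\<forall>K\<in>connected_sets n E. sum w K = 0 \<longrightarrow> K = I \<or> K = J"
  shows "block I \<noteq> block J"
proof -
  have w: "w \<in> hyp n I \<inter> hyp n J"
    using assms(4-6) unfolding hyp_def by blast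
  have "localization (csa n E) (hyp n I \<inter> hyp n J) \<subseteq> {hyp n I, hyp n J}"
    using w only unfolding localization_def csa_eq_image_connected_sets hyp_def by blast
  then have loc: "localization (csa n E) (hyp n I \<inter> hyp n J) = {hyp n I, hyp n J}"
    using I J unfolding localization_def csa_eq_image_connected_sets by blast
  have neq: "hyp n I \<noteq> hyp n J"
    using hyp_inject I J \<open>I \<noteq> J\<close> connected_sets_subset connected_sets_nonempty by metis
  have mem: "hyp n I \<in> csa n E" "hyp n J \<in> csa n E"
    using I J by (simp_all add: csa_eq_image_connected_sets)
  have amb: "hyp n I \<subseteq> ambient n" "hyp n J \<subseteq> ambient n"
    unfolding hyp_def by blast+
  have "hyp n J \<notin> block I"
    by (rule nice_partition_separates_pair[OF nice mem neq amb loc block_mem[OF I]])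
  then show ?thesis
    using block_mem(2)[OF J] by auto
qed

lemma block_of_disjoint_union:
  assumes I: "I \<in> connected_sets n E" and J: "J \<in> connected_sets n E"
    and K: "K \<in> connected_sets n E" and "I \<inter> J = {}" and "I \<union> J = K"
  shows "block I = block J \<or> block J = block K \<or> block I = block K"
proof (rule ccontr)
  assume "\<not> ?thesis"
  then have distinct: "block I \<noteq> block J" "block J \<noteq> block K" "block I \<noteq> block K"
    by simp_all
  define L where "L B = (if B = block I then I else if B = block J then J else K)" for B
  let ?Q = "{block I, block J, block K}"
  have "\<forall>H\<in>csa n E. \<exists>a. defining_form n a H"
    using defining_form_hyp_connected unfolding csa_eq_image_connected_sets by blast
  moreover have "?Q \<subseteq> P"
    using block_mem(1)[OF I] block_mem(1)[OF J] block_mem(1)[OF K] by blast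
  moreover have "\<forall>B\<in>?Q. hyp n (L B) \<in> B \<and> defining_form n (hyp_form (L B)) (hyp n (L B))"
    using distinct block_mem(2)[OF I] block_mem(2)[OF J] block_mem(2)[OF K]
      defining_form_hyp_connected[OF I] defining_form_hyp_connected[OF J]
      defining_form_hyp_connected[OF K]
    unfolding L_def by auto
  ultimately have indep: "lin_indep_family ?Q (\<lambda>B. hyp_form (L B))"
    by (rule nice_partition_representatives_lin_indep[OF nice finite_csa])
  define c where "c B = (if B = block K then -1 else 1 :: rat)" for B
  have "(\<Sum>B\<in>?Q. c B * hyp_form (L B) i) = hyp_form I i + hyp_form J i - hyp_form K i" for i
    using distinct unfolding c_def L_def by simp
  also have "\<dots> i = 0" for i
    using \<open>I \<inter> J = {}\<close> \<open>I \<union> J = K\<close> unfolding hyp_form_def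
    by (cases "i \<in> I"; cases "i \<in> J") auto
  finally have "(\<lambda>i. \<Sum>B\<in>?Q. c B * hyp_form (L B) i) = (\<lambda>_. 0)"
    by (rule ext)
  then have "c (block I) = 0"
    using indep unfolding lin_indep_family_def by blast
  then show False
    using distinct unfolding c_def by simp
qed

end

lemma Pow_1_to_4: "Pow {1..4::nat} =
  {{}, {1}, {2}, {3}, {4}, {1,2}, {1,3}, {1,4}, {2,3}, {2,4}, {3,4},
   {1,2,3}, {1,2,4}, {1,3,4}, {2,3,4}, {1,2,3,4}}"
proof -
  have "{1..4::nat} = {1,2,3,4}"
    by auto
  then show ?thesis
    by (simp add: Pow_insert insert_commute)
qed

lemma connected_sets_A32: "connected_sets 4 A32_edges =
  {{1}, {2}, {3}, {4}, {1,2}, {2,3}, {2,4}, {1,2,3}, {1,2,4}, {2,3,4}, {1,2,3,4}}"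
  (is "_ = ?S")
proof
  show "connected_sets 4 A32_edges \<subseteq> ?S"
  proof
    fix I assume "I \<in> connected_sets 4 A32_edges"
    then have I: "I \<in> Pow {1..4}" and conn: "induced_connected A32_edges I"
      unfolding connected_sets_def by auto
    have "I \<noteq> {}"
      using conn unfolding induced_connected_def by blast
    moreover have no_centre: "u = v" if "2 \<notin> I" "u \<in> I" "v \<in> I" for u v
      using induced_connected_has_neighbour[OF conn, of u v] that
      by (auto simp: A32_edges_def doubleton_eq_iff)
    ultimately show "I \<in> ?S"
      using I no_centre[of 1 3] no_centre[of 1 4] no_centre[of 3 4]
      unfolding Pow_1_to_4 by (simp only: insert_iff empty_iff) (elim disjE; simp)
  qed
  show "?S \<subseteq> connected_sets 4 A32_edges"
    unfolding connected_sets_def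
    by (simp add: induced_connected_star A32_edges_def doubleton_eq_iff)
qed

lemma connected_sets_C4: "connected_sets 4 C4_edges =
  {{1}, {2}, {3}, {4}, {1,2}, {1,4}, {2,3}, {3,4},
   {1,2,3}, {1,2,4}, {1,3,4}, {2,3,4}, {1,2,3,4}}"
  (is "_ = ?S")
proof
  show "connected_sets 4 C4_edges \<subseteq> ?S"
  proof
    fix I assume "I \<in> connected_sets 4 C4_edges"
    then have I: "I \<in> Pow {1..4}" and conn: "induced_connected C4_edges I"
      unfolding connected_sets_def by auto
    have "I \<noteq> {}"
      using conn unfolding induced_connected_def by blast
    moreover have "I \<noteq> {1, 3}" "I \<noteq> {2, 4}"
      using induced_connected_has_neighbour[OF conn, of 1 3]
        induced_connected_has_neighbour[OF conn, of 2 4]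
      by (auto simp: C4_edges_def doubleton_eq_iff)
    ultimately show "I \<in> ?S"
      using I unfolding Pow_1_to_4 by (simp only: insert_iff empty_iff) (elim disjE; simp)
  qed
  have "induced_connected C4_edges {1,2,3,4}"
    by (rule induced_connected_insert[OF induced_connected_star])
      (simp_all add: C4_edges_def doubleton_eq_iff)
  then show "?S \<subseteq> connected_sets 4 C4_edges"
    unfolding connected_sets_def
    by (simp add: induced_connected_star C4_edges_def doubleton_eq_iff)
qed

definition vec_of_list :: "rat list \<Rightarrow> nat \<Rightarrow> rat" where
  "vec_of_list xs i = (if i \<in> {1..length xs} then xs ! (i - 1) else 0)"

locale A32_nice_partition = csa_nice_partition 4 A32_edges P for P
begin

lemmas witness_facts = connected_sets_A32 vec_of_list_def ambient_def set_eq_subset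

lemma distinct_blocks:
  shows "block {1,2} \<noteq> block {1,2,3,4}"
    and "block {1,2,3} \<noteq> block {2,3,4}"
    and "block {1,2} \<noteq> block {2,3}"
    and "block {1,2} \<noteq> block {2,4}"
    and "block {2,4} \<noteq> block {1,2,3,4}"
    and "block {1,2,3} \<noteq> block {1,2,4}"
    and "block {2} \<noteq> block {1,2,3,4}"
    and "block {1,2} \<noteq> block {2,3,4}"
    and "block {2} \<noteq> block {1,2,3}"
    and "block {2} \<noteq> block {2,3,4}"
    and "block {2,3} \<noteq> block {2,4}"
    and "block {2,3} \<noteq> block {1,2,4}"
    and "block {2} \<noteq> block {1,2,4}"
    and "block {2,4} \<noteq> block {1,2,3}"
    and "block {2,3} \<noteq> block {1,2,3,4}"
    and "block {1,2,4} \<noteq> block {2,3,4}"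
  \<comment> \<open>The k-th point lies on the k-th pair of hyperplanes and on no other one.\<close>
  apply (rule block_neq_of_witness[where w = "vec_of_list [3, -3, -6, 6]"]; simp add: witness_facts)
  apply (rule block_neq_of_witness[where w = "vec_of_list [-3, -4, 7, -3]"]; simp add: witness_facts)
  apply (rule block_neq_of_witness[where w = "vec_of_list [5, -5, 5, -6]"]; simp add: witness_facts)
  apply (rule block_neq_of_witness[where w = "vec_of_list [6, -6, 9, 6]"]; simp add: witness_facts)
  apply (rule block_neq_of_witness[where w = "vec_of_list [3, -1, -3, 1]"]; simp add: witness_facts)
  apply (rule block_neq_of_witness[where w = "vec_of_list [-5, 6, -1, -1]"]; simp add: witness_facts)
  apply (rule block_neq_of_witness[where w = "vec_of_list [-1, 0, -3, 4]"]; simp add: witness_facts)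
  apply (rule block_neq_of_witness[where w = "vec_of_list [-6, 6, -2, -4]"]; simp add: witness_facts)
  apply (rule block_neq_of_witness[where w = "vec_of_list [6, 0, -6, 3]"]; simp add: witness_facts)
  apply (rule block_neq_of_witness[where w = "vec_of_list [4, 0, -9, 9]"]; simp add: witness_facts)
  apply (rule block_neq_of_witness[where w = "vec_of_list [-4, 6, -6, -6]"]; simp add: witness_facts)
  apply (rule block_neq_of_witness[where w = "vec_of_list [4, -3, 3, -1]"]; simp add: witness_facts)
  apply (rule block_neq_of_witness[where w = "vec_of_list [2, 0, -6, -2]"]; simp add: witness_facts)
  apply (rule block_neq_of_witness[where w = "vec_of_list [1, 2, -3, -2]"]; simp add: witness_facts)
  apply (rule block_neq_of_witness[where w = "vec_of_list [-5, 4, -4, 5]"]; simp add: witness_facts)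
  apply (rule block_neq_of_witness[where w = "vec_of_list [6, -2, 6, -4]"]; simp add: witness_facts)
  done

lemma shared_blocks:
  shows "block {1} = block {2,3} \<or> block {2,3} = block {1,2,3} \<or> block {1} = block {1,2,3}"
    and "block {1} = block {2,4} \<or> block {2,4} = block {1,2,4} \<or> block {1} = block {1,2,4}"
    and "block {2} = block {4} \<or> block {4} = block {2,4} \<or> block {2} = block {2,4}"
    and "block {3} = block {1,2} \<or> block {1,2} = block {1,2,3} \<or> block {3} = block {1,2,3}"
    and "block {3} = block {2,4} \<or> block {2,4} = block {2,3,4} \<or> block {3} = block {2,3,4}"
    and "block {4} = block {1,2,3} \<or> block {1,2,3} = block {1,2,3,4} \<or> block {4} = block {1,2,3,4}"
  by (rule block_of_disjoint_union; simp add: connected_sets_A32 set_eq_subset)+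

lemma inconsistent: False
  using distinct_blocks shared_blocks by smt

end

lemma not_factored_A32: "\<not> factored 4 (csa 4 A32_edges)"
proof
  assume "factored 4 (csa 4 A32_edges)"
  then obtain P where "nice_partition 4 (csa 4 A32_edges) P"
    unfolding factored_def by blast
  then interpret A32_nice_partition P
    by unfold_locales
  show False
    by (rule inconsistent)
qed

locale C4_nice_partition = csa_nice_partition 4 C4_edges P for P
begin

lemmas witness_facts = connected_sets_C4 vec_of_list_def ambient_def set_eq_subset

lemma distinct_blocks:
  shows "block {3,4} \<noteq> block {1,2,4}"
    and "block {1,2} \<noteq> block {2,3}"
    and "block {3,4} \<noteq> block {1,2,3}"
    and "block {1,4} \<noteq> block {1,2,3}"
    and "block {1,2,3} \<noteq> block {1,2,4}"
    and "block {1,2} \<noteq> block {1,3,4}"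
    and "block {2,3} \<noteq> block {1,3,4}"
    and "block {1,4} \<noteq> block {2,3,4}"
    and "block {1,2} \<noteq> block {2,3,4}"
    and "block {1,2,4} \<noteq> block {2,3,4}"
    and "block {2,3} \<noteq> block {1,2,4}"
    and "block {1,2} \<noteq> block {1,4}"
    and "block {1,2,3} \<noteq> block {2,3,4}"
    and "block {1,2,3} \<noteq> block {1,3,4}"
    and "block {4} \<noteq> block {1,3,4}"
    and "block {1,4} \<noteq> block {3,4}"
    and "block {2,3} \<noteq> block {3,4}"
  apply (rule block_neq_of_witness[where w = "vec_of_list [2, 1, 3, -3]"]; simp add: witness_facts)
  apply (rule block_neq_of_witness[where w = "vec_of_list [8, -8, 8, 4]"]; simp add: witness_facts)
  apply (rule block_neq_of_witness[where w = "vec_of_list [-8, 1, 7, -7]"]; simp add: witness_facts)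
  apply (rule block_neq_of_witness[where w = "vec_of_list [3, 2, -5, -3]"]; simp add: witness_facts)
  apply (rule block_neq_of_witness[where w = "vec_of_list [-2, -1, 3, 3]"]; simp add: witness_facts)
  apply (rule block_neq_of_witness[where w = "vec_of_list [3, -3, -6, 3]"]; simp add: witness_facts)
  apply (rule block_neq_of_witness[where w = "vec_of_list [1, -7, 7, -8]"]; simp add: witness_facts)
  apply (rule block_neq_of_witness[where w = "vec_of_list [3, 6, -3, -3]"]; simp add: witness_facts)
  apply (rule block_neq_of_witness[where w = "vec_of_list [6, -6, -2, 8]"]; simp add: witness_facts)
  apply (rule block_neq_of_witness[where w = "vec_of_list [-6, 3, -6, 3]"]; simp add: witness_facts)
  apply (rule block_neq_of_witness[where w = "vec_of_list [4, 2, -2, -6]"]; simp add: witness_facts)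
  apply (rule block_neq_of_witness[where w = "vec_of_list [-2, 2, -1, 2]"]; simp add: witness_facts)
  apply (rule block_neq_of_witness[where w = "vec_of_list [1, -7, 6, 1]"]; simp add: witness_facts)
  apply (rule block_neq_of_witness[where w = "vec_of_list [-2, 3, -1, 3]"]; simp add: witness_facts)
  apply (rule block_neq_of_witness[where w = "vec_of_list [-1, -9, 1, 0]"]; simp add: witness_facts)
  apply (rule block_neq_of_witness[where w = "vec_of_list [-5, -9, -5, 5]"]; simp add: witness_facts)
  apply (rule block_neq_of_witness[where w = "vec_of_list [-9, 4, -4, 4]"]; simp add: witness_facts)
  done

lemma shared_blocks:
  shows "block {3} = block {1,2} \<or> block {1,2} = block {1,2,3} \<or> block {3} = block {1,2,3}"
    and "block {3} = block {1,4} \<or> block {1,4} = block {1,3,4} \<or> block {3} = block {1,3,4}"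
    and "block {4} = block {1,2} \<or> block {1,2} = block {1,2,4} \<or> block {4} = block {1,2,4}"
    and "block {4} = block {2,3} \<or> block {2,3} = block {2,3,4} \<or> block {4} = block {2,3,4}"
    and "block {4} = block {1,2,3} \<or> block {1,2,3} = block {1,2,3,4} \<or> block {4} = block {1,2,3,4}"
    and "block {1,2} = block {3,4} \<or> block {3,4} = block {1,2,3,4} \<or> block {1,2} = block {1,2,3,4}"
    and "block {1,4} = block {2,3} \<or> block {2,3} = block {1,2,3,4} \<or> block {1,4} = block {1,2,3,4}"
  by (rule block_of_disjoint_union; simp add: connected_sets_C4 set_eq_subset)+

lemma inconsistent: False
  using distinct_blocks shared_blocks by smt

end

lemma not_factored_C4: "\<not> factored 4 (csa 4 C4_edges)"
proof
  assume "factored 4 (csa 4 C4_edges)"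
  then obtain P where "nice_partition 4 (csa 4 C4_edges) P"
    unfolding factored_def by blast
  then interpret C4_nice_partition P
    by unfold_locales
  show False
    by (rule inconsistent)
qed

theorem proposition8p8:
  shows "\<not> factored 4 (csa 4 A32_edges) \<and> \<not> factored 4 (csa 4 C4_edges)"
  using not_factored_A32 not_factored_C4 by blast

end
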